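(* For each of the following sets $\mathcal S\subseteq\{0,1\}^3$, and for every set obtained from any of them by any sequence of coordinate negations and coordinate permutations, $\rho(\mathcal S)=3$: $\{000,010,100,101\}$, $\{000,001,010,011,100\}$, $\{000,001,010,011,100,101\}$, $\{000,001,010,101,110\}$, $\{000,001,010,011,100,111\}$, $\{000,001,010,101,110,111\}$, $\{0,1\}^3\setminus\{111\}$, and $\{0,1\}^3$.
   Context: Binary triples $(x_1,x_2,x_3)\in\{0,1\}^3$ are written $x_1x_2x_3$. Let $\mathcal S\subseteq\{0,1\}^3$ be nonempty. A distribution scheme with domain $\mathcal S$ is a pair $(P_R,\psi)$ where $P_R$ is a probability distribution on a finite set $\mathcal R$ and $\psi:\mathcal S\times\mathcal R\to\mathcal W_{12}\times\mathcal W_{23}\times\mathcal W_{31}$ for finite share alphabets. Given $\mathbf x=(x_1,x_2,x_3)\in\mathcal S$, the shares are $(W_{12},W_{23},W_{31})=\psi(\mathbf x,R)$, $R\sim P_R$. Party $P_1$ sees $V_1=(W_{12},W_{31})$, $P_2$ sees $V_2=(W_{23},W_{12})$, $P_3$ sees $V_3=(W_{31},W_{23})$. It is a 3SS scheme if (Correctness) for each $i$ there is a function $\phi_i$ with $\Pr[\phi_i(V_i)=x_i]=1$ for every $\mathbf x\in\mathcal S$, and (Perfect privacy) for each $i$ and all $\mathbf x,\mathbf x'\in\mathcal S$ with $x_i=x'_i$, $V_i$ has the same distribution under secret $\mathbf x$ as under $\mathbf x'$. The randomness complexity $\rho(\mathcal S)$ is the minimum of $\log_2|\mathcal R|$ over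 all 3SS schemes with domain $\mathcal S$. A coordinate negation maps $\mathcal S$ to $\{\mathbf x\oplus e_i:\mathbf x\in\mathcal S\}$; a coordinate permutation permutes the three coordinates of every element. *)

theory Defs
  imports Main "HOL-Library.Log_Nat"
begin

datatype idx = I1 | I2 | I3

type_synonym secret = "idx \<Rightarrow> bool"

definition trip :: "nat \<Rightarrow> nat \<Rightarrow> nat \<Rightarrow> secret" where
  "trip a b c = (\<lambda>i. case i of I1 \<Rightarrow> a = 1 | I2 \<Rightarrow> b = 1 | I3 \<Rightarrow> c = 1)"

text \<open>Shares (W12, W23, W31); finite share alphabets are encoded injectively into nat.\<close>
type_synonym shares = "nat \<times> nat \<times> nat"

fun view :: "idx \<Rightarrow> shares \<Rightarrow> nat \<times> nat" where
  "view I1 (w12, w23, w31) = (w12, w31)"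
| "view I2 (w12, w23, w31) = (w23, w12)"
| "view I3 (w12, w23, w31) = (w31, w23)"

definition is_3SS :: "secret set \<Rightarrow> nat set \<Rightarrow> (nat \<Rightarrow> real) \<Rightarrow> (secret \<Rightarrow> nat \<Rightarrow> shares) \<Rightarrow> bool" where
  "is_3SS S R P psi \<longleftrightarrow>
     finite R \<and> (\<forall>r\<in>R. 0 \<le> P r) \<and> sum P R = 1 \<and>
     (\<forall>i. \<exists>phi. \<forall>x\<in>S. \<forall>r\<in>R. 0 < P r \<longrightarrow> phi (view i (psi x r)) = x i) \<and>
     (\<forall>i. \<forall>x\<in>S. \<forall>x'\<in>S. x i = x' i \<longrightarrow>
        (\<forall>v. sum P {r\<in>R. view i (psi x r) = v} = sum P {r\<in>R. view i (psi x' r) = v}))"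

definition rho :: "secret set \<Rightarrow> real" where
  "rho S = log 2 (real (LEAST n. \<exists>R P psi. is_3SS S R P psi \<and> card R = n))"

definition negate :: "idx \<Rightarrow> secret set \<Rightarrow> secret set" where
  "negate i S = (\<lambda>x. x(i := \<not> x i)) ` S"

definition permute :: "(idx \<Rightarrow> idx) \<Rightarrow> secret set \<Rightarrow> secret set" where
  "permute \<sigma> S = (\<lambda>x. x \<circ> \<sigma>) ` S"

inductive_set equiv_sets :: "secret set \<Rightarrow> secret set set" for S0 where
  base: "S0 \<in> equiv_sets S0"
| neg: "T \<in> equiv_sets S0 \<Longrightarrow> negate i T \<in> equiv_sets S0"
| perm: "T \<in> equiv_sets S0 \<Longrightarrow> bij \<sigma> \<Longrightarrow> permute \<sigma> T \<in> equiv_sets S0"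

end

theory Submission
  imports Defs
begin

text \<open>
  Upper bound: with three uniform random bits \<open>r0, r1, r2\<close>, the shares
  \<open>W12 = (r0, r1)\<close>, \<open>W23 = (r1 + x2, r2)\<close>, \<open>W31 = (r2 + x3, r0 + x1)\<close> over GF(2)
  form a 3SS scheme for all of \<open>{0,1}\<^sup>3\<close>, hence for every domain.

  Lower bound: every listed domain contains \<open>A = {000, 010, 100, 101}\<close> or a permuted
  copy of it, and the bound \<open>|R| \<ge> 8\<close> passes to subsets of the domain, coordinate
  negations and permutations (re-encode the secret and relabel the shares). For \<open>A\<close>,
  consider the set of share triples that a secret produces with positive probability:
  secrets that agree in coordinate \<open>i\<close> give party \<open>i\<close> the same set of views, secrets
  that differ there give disjoint sets. Chasing these equalities and disjointnesses among
  the supports of \<open>000, 010, 100, 101\<close> shows that in the support of \<open>000\<close> each value of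
  \<open>W31\<close> occurs with two values of \<open>W12\<close>, each value of \<open>W12\<close> with two values of \<open>W23\<close>,
  and that there are at least two values of \<open>W31\<close> (four, if some \<open>W12\<close> value repeats);
  either way the support has at least 8 elements.
\<close>

unbundle bit_operations_syntax

lemma is_3SSI:
  assumes "finite R" and "\<And>r. r \<in> R \<Longrightarrow> 0 \<le> P r" and "sum P R = 1"
    and "\<And>i. \<exists>phi. \<forall>x\<in>S. \<forall>r\<in>R. 0 < P r \<longrightarrow> phi (view i (psi x r)) = x i"
    and "\<And>i x x' v. x \<in> S \<Longrightarrow> x' \<in> S \<Longrightarrow> x i = x' i \<Longrightarrow>
           sum P {r\<in>R. view i (psi x r) = v} = sum P {r\<in>R. view i (psi x' r) = v}"
  shows "is_3SS S R P psi"
  using assms unfolding is_3SS_def by blast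

lemma
  assumes "is_3SS S R P psi"
  shows is_3SS_finite: "finite R"
    and is_3SS_nonneg: "r \<in> R \<Longrightarrow> 0 \<le> P r"
    and is_3SS_sum: "sum P R = 1"
    and is_3SS_decoder: "\<exists>phi. \<forall>x\<in>S. \<forall>r\<in>R. 0 < P r \<longrightarrow> phi (view i (psi x r)) = x i"
  using assms unfolding is_3SS_def by auto

lemma is_3SS_private:
  assumes "is_3SS S R P psi" and "x \<in> S" "x' \<in> S" "x i = x' i"
  shows "sum P {r\<in>R. view i (psi x r) = v} = sum P {r\<in>R. view i (psi x' r) = v}"
proof -
  have "\<forall>i. \<forall>x\<in>S. \<forall>x'\<in>S. x i = x' i \<longrightarrow>
      (\<forall>v. sum P {r\<in>R. view i (psi x r) = v} = sum P {r\<in>R. view i (psi x' r) = v})"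
    using assms(1) unfolding is_3SS_def by (elim conjE)
  from this[rule_format, OF assms(2-4)] show ?thesis .
qed

definition support :: "nat set \<Rightarrow> (nat \<Rightarrow> real) \<Rightarrow> nat set" where
  "support R P = {r\<in>R. 0 < P r}"

lemma sum_pos_iff_ex_pos:
  fixes f :: "'a \<Rightarrow> 'b::ordered_comm_monoid_add"
  assumes "finite A" and "\<And>a. a \<in> A \<Longrightarrow> 0 \<le> f a"
  shows "0 < sum f A \<longleftrightarrow> (\<exists>a\<in>A. 0 < f a)"
  using sum_nonneg_eq_0_iff[OF assms] sum_nonneg[of A f] assms(2) by (auto simp: order.strict_iff_order)

lemma support_nonempty:
  assumes "is_3SS S R P psi"
  shows "support R P \<noteq> {}"
proof -
  have "0 < sum P R" using is_3SS_sum[OF assms] by simp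
  then show ?thesis
    using sum_pos_iff_ex_pos[OF is_3SS_finite[OF assms] is_3SS_nonneg[OF assms]]
    by (auto simp: support_def)
qed

lemma mem_view_support_iff:
  assumes "is_3SS S R P psi"
  shows "u \<in> view i ` psi x ` support R P \<longleftrightarrow> 0 < sum P {r\<in>R. view i (psi x r) = u}"
  using sum_pos_iff_ex_pos[of "{r\<in>R. view i (psi x r) = u}" P]
    is_3SS_finite[OF assms] is_3SS_nonneg[OF assms]
  by (auto simp: support_def)

lemma view_support_eq:
  assumes "is_3SS S R P psi" and "x \<in> S" "x' \<in> S" "x i = x' i"
  shows "view i ` psi x ` support R P = view i ` psi x' ` support R P"
  by (rule set_eqI) (simp only: mem_view_support_iff[OF assms(1)] is_3SS_private[OF assms])

lemma view_support_disjoint: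
  assumes "is_3SS S R P psi" and "x \<in> S" "x' \<in> S" "x i \<noteq> x' i"
  shows "view i ` psi x ` support R P \<inter> view i ` psi x' ` support R P = {}"
proof -
  obtain phi where phi: "\<forall>y\<in>S. \<forall>r\<in>R. 0 < P r \<longrightarrow> phi (view i (psi y r)) = y i"
    using is_3SS_decoder[OF assms(1)] by blast
  have decode: "phi u = y i" if "y \<in> S" "u \<in> view i ` psi y ` support R P" for u y
    using that phi unfolding support_def by blast
  show ?thesis
  proof (rule equals0I)
    fix u assume "u \<in> view i ` psi x ` support R P \<inter> view i ` psi x' ` support R P"
    then have "phi u = x i" "phi u = x' i" using decode assms(2,3) by blast+
    then show False using assms(4) by simp
  qed
qed

lemma view_I1_image_iff: "(u, t) \<in> view I1 ` W \<longleftrightarrow> (\<exists>v. (u, v, t) \<in> W)"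
  by force

lemma view_I2_image_iff: "(v, u) \<in> view I2 ` W \<longleftrightarrow> (\<exists>t. (u, v, t) \<in> W)"
  by force

lemma view_I3_image_iff: "(t, v) \<in> view I3 ` W \<longleftrightarrow> (\<exists>u. (u, v, t) \<in> W)"
  by force

lemmas view_image_iffs = view_I1_image_iff view_I2_image_iff view_I3_image_iff

lemma double_card_le_card_if_fibres_ge_2:
  assumes fin: "finite A" and fibres: "\<And>y. y \<in> Y \<Longrightarrow> \<exists>a b. a \<noteq> b \<and> (a, y) \<in> A \<and> (b, y) \<in> A"
  shows "2 * card Y \<le> card A"
proof -
  obtain a b where ab: "\<And>y. y \<in> Y \<Longrightarrow> a y \<noteq> b y \<and> (a y, y) \<in> A \<and> (b y, y) \<in> A"
    using fibres by metis
  have "Y \<subseteq> snd ` A" using ab by force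
  then have "finite Y" using fin finite_surj by blast
  let ?Xa = "(\<lambda>y. (a y, y)) ` Y" and ?Xb = "(\<lambda>y. (b y, y)) ` Y"
  have "card ?Xa = card Y" "card ?Xb = card Y" by (simp_all add: card_image inj_on_def)
  moreover have "card (?Xa \<union> ?Xb) = card ?Xa + card ?Xb"
    using ab \<open>finite Y\<close> by (intro card_Un_disjoint) fastforce+
  moreover have "card (?Xa \<union> ?Xb) \<le> card A"
    using ab fin by (intro card_mono) auto
  ultimately show ?thesis by simp
qed

text \<open>\<open>Wx\<close> stands for the set of share triples that secret \<open>x\<close> produces with positive
  probability; the assumptions are what correctness and privacy say about these sets.\<close>
locale share_supports =
  fixes W000 W010 W100 W101 :: "shares set"
  assumes finite_W000: "finite W000" and W000_nonempty: "W000 \<noteq> {}"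
    and same_000_010: "view I1 ` W000 = view I1 ` W010" "view I3 ` W000 = view I3 ` W010"
    and apart_000_010: "view I2 ` W000 \<inter> view I2 ` W010 = {}"
    and same_000_100: "view I2 ` W000 = view I2 ` W100" "view I3 ` W000 = view I3 ` W100"
    and apart_000_100: "view I1 ` W000 \<inter> view I1 ` W100 = {}"
    and same_000_101: "view I2 ` W000 = view I2 ` W101"
    and same_100_101: "view I1 ` W100 = view I1 ` W101"
    and apart_100_101: "view I3 ` W100 \<inter> view I3 ` W101 = {}"
begin

lemma w31_has_two_w12:
  assumes "(u, v, t) \<in> W000"
  shows "\<exists>u'. u' \<noteq> u \<and> (u', t) \<in> view I1 ` W000"
proof -
  have "(t, v) \<in> view I3 ` W010"
    using assms by (auto simp: view_image_iffs simp flip: same_000_010(2))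
  then obtain u' where u': "(u', v, t) \<in> W010" by (auto simp: view_image_iffs)
  have "(v, u) \<in> view I2 ` W000" "(v, u') \<in> view I2 ` W010"
    using assms u' by (auto simp: view_image_iffs)
  then have "u' \<noteq> u" using apart_000_010 by blast
  moreover have "(u', t) \<in> view I1 ` W000"
    using u' by (auto simp: view_image_iffs same_000_010(1))
  ultimately show ?thesis by blast
qed

lemma w12_has_two_w31_in_100:
  assumes "(u, v, t) \<in> W000"
  shows "\<exists>t1 t2. t1 \<noteq> t2 \<and> (u, t1) \<in> view I1 ` W100 \<and> (u, t2) \<in> view I1 ` W100"
proof -
  have "(v, u) \<in> view I2 ` W100" "(v, u) \<in> view I2 ` W101"
    using assms by (auto simp: view_image_iffs simp flip: same_000_100(1) same_000_101)
  then obtain t1 t2 where t1: "(u, v, t1) \<in> W100" and t2: "(u, v, t2) \<in> W101"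
    by (auto simp: view_image_iffs)
  have "(t1, v) \<in> view I3 ` W100" "(t2, v) \<in> view I3 ` W101"
    using t1 t2 by (auto simp: view_image_iffs)
  then have "t1 \<noteq> t2" using apart_100_101 by blast
  moreover have "(u, t1) \<in> view I1 ` W100" using t1 by (auto simp: view_image_iffs)
  moreover have "(u, t2) \<in> view I1 ` W100" using t2 by (auto simp: view_image_iffs same_100_101)
  ultimately show ?thesis by blast
qed

lemma w31_of_100_occurs_in_000:
  assumes "(u, t) \<in> view I1 ` W100"
  shows "t \<in> snd ` view I1 ` W000"
proof -
  obtain v where "(t, v) \<in> view I3 ` W100" using assms by (auto simp: view_image_iffs)
  then obtain u' where "(u', t) \<in> view I1 ` W000"
    by (auto simp: view_image_iffs simp flip: same_000_100(2))
  then show ?thesis by force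
qed

lemma w12_has_two_w23:
  assumes "(u, v, t) \<in> W000"
  shows "\<exists>v'. v' \<noteq> v \<and> (v', u) \<in> view I2 ` W000"
proof -
  have "(v, u) \<in> view I2 ` W101"
    using assms by (auto simp: view_image_iffs simp flip: same_000_101)
  then obtain t' where t': "(u, v, t') \<in> W101" by (auto simp: view_image_iffs)
  then have "(u, t') \<in> view I1 ` W100" by (auto simp: view_image_iffs same_100_101)
  then obtain v' where v': "(u, v', t') \<in> W100" by (auto simp: view_image_iffs)
  have "(t', v') \<in> view I3 ` W100" "(t', v) \<in> view I3 ` W101"
    using t' v' by (auto simp: view_image_iffs)
  then have "v' \<noteq> v" using apart_100_101 by blast
  moreover have "(v', u) \<in> view I2 ` W000"
    using v' by (auto simp: view_image_iffs same_000_100(1))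
  ultimately show ?thesis by blast
qed

lemma card_view_I1_ge: "2 * card (snd ` view I1 ` W000) \<le> card (view I1 ` W000)"
proof (rule double_card_le_card_if_fibres_ge_2)
  show "finite (view I1 ` W000)" using finite_W000 by simp
next
  fix t assume "t \<in> snd ` view I1 ` W000"
  then obtain u v where p: "(u, v, t) \<in> W000" by force
  then obtain u' where "u' \<noteq> u" "(u', t) \<in> view I1 ` W000" using w31_has_two_w12 by blast
  moreover have "(u, t) \<in> view I1 ` W000" using p by (auto simp: view_image_iffs)
  ultimately show "\<exists>a b. a \<noteq> b \<and> (a, t) \<in> view I1 ` W000 \<and> (b, t) \<in> view I1 ` W000" by blast
qed

lemma card_view_I2_ge: "2 * card (fst ` view I1 ` W000) \<le> card (view I2 ` W000)"
proof (rule double_card_le_card_if_fibres_ge_2)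
  show "finite (view I2 ` W000)" using finite_W000 by simp
next
  fix u assume "u \<in> fst ` view I1 ` W000"
  then obtain v t where p: "(u, v, t) \<in> W000" by force
  then obtain v' where "v' \<noteq> v" "(v', u) \<in> view I2 ` W000" using w12_has_two_w23 by blast
  moreover have "(v, u) \<in> view I2 ` W000" using p by (auto simp: view_image_iffs)
  ultimately show "\<exists>a b. a \<noteq> b \<and> (a, u) \<in> view I2 ` W000 \<and> (b, u) \<in> view I2 ` W000" by blast
qed

lemma card_w31_ge_2: "2 \<le> card (snd ` view I1 ` W000)"
proof -
  obtain w where "w \<in> W000" using W000_nonempty by blast
  moreover obtain u v t where "w = (u, v, t)" by (cases w)
  ultimately have "(u, v, t) \<in> W000" by simp
  then obtain t1 t2 where "t1 \<noteq> t2" "(u, t1) \<in> view I1 ` W100" "(u, t2) \<in> view I1 ` W100"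
    using w12_has_two_w31_in_100 by blast
  then have "card {t1, t2} \<le> card (snd ` view I1 ` W000)"
    using finite_W000 w31_of_100_occurs_in_000 by (intro card_mono) auto
  then show ?thesis using \<open>t1 \<noteq> t2\<close> by simp
qed

text \<open>If some \<open>w12\<close> value occurs with two values \<open>t, t'\<close> of \<open>w31\<close>, the two further values
  supplied by the secret 100 are distinct from them because party 1 tells 000 and 100 apart.\<close>
lemma card_w31_ge_4_if_not_inj:
  assumes "\<not> inj_on fst (view I1 ` W000)"
  shows "4 \<le> card (snd ` view I1 ` W000)"
proof -
  obtain p q where pq: "p \<in> view I1 ` W000" "q \<in> view I1 ` W000" "fst p = fst q" "p \<noteq> q"
    using assms unfolding inj_on_def by blast
  then obtain u t t' where "p = (u, t)" "q = (u, t')" by (metis prod.collapse)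
  with pq have tt': "t \<noteq> t'" "(u, t) \<in> view I1 ` W000" "(u, t') \<in> view I1 ` W000" by auto
  then obtain v where "(u, v, t) \<in> W000" by (auto simp: view_image_iffs)
  then obtain t1 t2 where t12: "t1 \<noteq> t2" "(u, t1) \<in> view I1 ` W100" "(u, t2) \<in> view I1 ` W100"
    using w12_has_two_w31_in_100 by blast
  then have "(u, t1) \<notin> view I1 ` W000" "(u, t2) \<notin> view I1 ` W000"
    using apart_000_100 by blast+
  then have "t1 \<notin> {t, t'}" "t2 \<notin> {t, t'}" using tt'(2,3) by auto
  then have "card {t, t', t1, t2} = 4" using tt'(1) t12(1) by auto
  moreover have "t \<in> snd ` view I1 ` W000" "t' \<in> snd ` view I1 ` W000"
    using tt'(2,3) by force+
  moreover have "t1 \<in> snd ` view I1 ` W000" "t2 \<in> snd ` view I1 ` W000"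
    using t12(2,3) by (simp_all add: w31_of_100_occurs_in_000)
  ultimately have "{t, t', t1, t2} \<subseteq> snd ` view I1 ` W000" by simp
  then have "card {t, t', t1, t2} \<le> card (snd ` view I1 ` W000)"
    using finite_W000 by (intro card_mono) auto
  then show ?thesis using \<open>card {t, t', t1, t2} = 4\<close> by simp
qed

lemma card_ge_8: "8 \<le> card W000"
proof (cases "inj_on fst (view I1 ` W000)")
  case True
  then have "card (fst ` view I1 ` W000) = card (view I1 ` W000)" by (rule card_image)
  moreover have "card (view I2 ` W000) \<le> card W000" using finite_W000 by (rule card_image_le)
  ultimately show ?thesis using card_view_I2_ge card_view_I1_ge card_w31_ge_2 by linarith
next
  case False
  have "card (view I1 ` W000) \<le> card W000" using finite_W000 by (rule card_image_le)
  then show ?thesis using card_view_I1_ge card_w31_ge_4_if_not_inj[OF False] by linarith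
qed

end

definition core_set :: "secret set" where
  "core_set = {trip 0 0 0, trip 0 1 0, trip 1 0 0, trip 1 0 1}"

definition randomness_ge_8 :: "secret set \<Rightarrow> bool" where
  "randomness_ge_8 S \<longleftrightarrow> (\<forall>R P psi. is_3SS S R P psi \<longrightarrow> 8 \<le> card R)"

lemma share_supports_core_set:
  assumes "is_3SS S R P psi" and "core_set \<subseteq> S"
  shows "share_supports (psi (trip 0 0 0) ` support R P) (psi (trip 0 1 0) ` support R P)
    (psi (trip 1 0 0) ` support R P) (psi (trip 1 0 1) ` support R P)"
proof -
  have secrets: "trip 0 0 0 \<in> S" "trip 0 1 0 \<in> S" "trip 1 0 0 \<in> S" "trip 1 0 1 \<in> S"
    using assms(2) by (auto simp: core_set_def)
  have "finite (psi (trip 0 0 0) ` support R P)"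
    using is_3SS_finite[OF assms(1)] by (simp add: support_def)
  moreover have "psi (trip 0 0 0) ` support R P \<noteq> {}"
    using support_nonempty[OF assms(1)] by simp
  ultimately show ?thesis
    by unfold_locales
      (assumption | (rule view_support_eq[OF assms(1)] view_support_disjoint[OF assms(1)];
        (rule secrets | simp add: trip_def)))+
qed

lemma randomness_ge_8_core_set: "randomness_ge_8 core_set"
  unfolding randomness_ge_8_def
proof (intro allI impI)
  fix R P psi assume scheme: "is_3SS core_set R P psi"
  have "8 \<le> card (psi (trip 0 0 0) ` support R P)"
    using share_supports.card_ge_8[OF share_supports_core_set[OF scheme order.refl]] .
  also have "\<dots> \<le> card (support R P)"
    using is_3SS_finite[OF scheme] by (intro card_image_le) (simp add: support_def)
  also have "\<dots> \<le> card R"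
    using is_3SS_finite[OF scheme] by (intro card_mono) (auto simp: support_def)
  finally show "8 \<le> card R" .
qed

text \<open>Party \<open>j\<close> of the new scheme sees what party \<open>k j\<close> saw (up to the bijection
  \<open>sw j\<close>), and its bit is that of party \<open>k j\<close> (up to the constant flip \<open>c j\<close>).\<close>
lemma is_3SS_reindex:
  assumes scheme: "is_3SS S' R P psi"
    and into: "\<And>x. x \<in> S \<Longrightarrow> h x \<in> S'"
    and coord: "\<And>j x. x \<in> S \<Longrightarrow> x j = (h x (k j) \<noteq> c j)"
    and views: "\<And>j w. view j (g w) = sw j (view (k j) w)"
    and involution: "\<And>j u. sw j (sw j u) = u"
  shows "is_3SS S R P (\<lambda>x r. g (psi (h x) r))"
proof (rule is_3SSI)
  show "finite R" "sum P R = 1" "\<And>r. r \<in> R \<Longrightarrow> 0 \<le> P r"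
    using is_3SS_finite[OF scheme] is_3SS_sum[OF scheme] is_3SS_nonneg[OF scheme] by auto
next
  fix j
  obtain phi where phi: "\<forall>y\<in>S'. \<forall>r\<in>R. 0 < P r \<longrightarrow> phi (view (k j) (psi y r)) = y (k j)"
    using is_3SS_decoder[OF scheme] by blast
  show "\<exists>phi'. \<forall>x\<in>S. \<forall>r\<in>R. 0 < P r \<longrightarrow> phi' (view j (g (psi (h x) r))) = x j"
    by (rule exI[of _ "\<lambda>u. phi (sw j u) \<noteq> c j"]) (simp add: views involution phi into coord)
next
  fix j x x' v assume x: "x \<in> S" "x' \<in> S" "x j = x' j"
  then have "h x (k j) = h x' (k j)" using coord[of x j] coord[of x' j] by auto
  then have "sum P {r\<in>R. view (k j) (psi (h x) r) = sw j v} =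
      sum P {r\<in>R. view (k j) (psi (h x') r) = sw j v}"
    by (rule is_3SS_private[OF scheme into[OF x(1)] into[OF x(2)]])
  moreover have "view j (g w) = v \<longleftrightarrow> view (k j) w = sw j v" for w
    unfolding views by (metis involution)
  ultimately show "sum P {r\<in>R. view j (g (psi (h x) r)) = v} =
      sum P {r\<in>R. view j (g (psi (h x') r)) = v}"
    by simp
qed

lemma is_3SS_subset: "is_3SS S' R P psi \<Longrightarrow> S \<subseteq> S' \<Longrightarrow> is_3SS S R P psi"
  using is_3SS_reindex[where h = "\<lambda>x. x" and k = "\<lambda>j. j" and c = "\<lambda>_. False"
      and g = "\<lambda>w. w" and sw = "\<lambda>_ u. u"]
  by blast

lemma is_3SS_negate:
  assumes "is_3SS (negate i S) R P psi"
  shows "is_3SS S R P (\<lambda>x. psi (x(i := \<not> x i)))"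
proof (rule is_3SS_reindex[OF assms, where k = "\<lambda>j. j" and c = "\<lambda>j. j = i" and g = "\<lambda>w. w"
      and sw = "\<lambda>_ u. u"])
  show "\<And>x. x \<in> S \<Longrightarrow> x(i := \<not> x i) \<in> negate i S" unfolding negate_def by (rule imageI)
qed auto

fun joint_share :: "shares \<Rightarrow> idx \<Rightarrow> idx \<Rightarrow> nat" where
  "joint_share (w12, w23, w31) I1 I2 = w12"
| "joint_share (w12, w23, w31) I2 I1 = w12"
| "joint_share (w12, w23, w31) I2 I3 = w23"
| "joint_share (w12, w23, w31) I3 I2 = w23"
| "joint_share (w12, w23, w31) I3 I1 = w31"
| "joint_share (w12, w23, w31) I1 I3 = w31"
| "joint_share _ _ _ = 0"

definition relabel_shares :: "(idx \<Rightarrow> idx) \<Rightarrow> shares \<Rightarrow> shares" where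
  "relabel_shares \<tau> w =
     (joint_share w (\<tau> I1) (\<tau> I2), joint_share w (\<tau> I2) (\<tau> I3), joint_share w (\<tau> I3) (\<tau> I1))"

fun succ_idx :: "idx \<Rightarrow> idx" where
  "succ_idx I1 = I2" | "succ_idx I2 = I3" | "succ_idx I3 = I1"

definition swap_if :: "bool \<Rightarrow> 'a \<times> 'a \<Rightarrow> 'a \<times> 'a" where
  "swap_if b p = (if b then prod.swap p else p)"

lemma swap_if_swap_if [simp]: "swap_if b (swap_if b p) = p"
  by (simp add: swap_if_def)

text \<open>A permutation reversing the cyclic order \<open>I1 \<rightarrow> I2 \<rightarrow> I3\<close> exchanges the two
  shares inside every view.\<close>
lemma view_relabel_shares:
  assumes "inj \<tau>"
  shows "view j (relabel_shares \<tau> w) = swap_if (\<tau> (succ_idx j) \<noteq> succ_idx (\<tau> j)) (view (\<tau> j) w)"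
proof -
  have "\<tau> I1 \<noteq> \<tau> I2" "\<tau> I2 \<noteq> \<tau> I3" "\<tau> I1 \<noteq> \<tau> I3" using assms by (auto dest: injD)
  then show ?thesis
    by (cases w; cases j; cases "\<tau> I1"; cases "\<tau> I2"; cases "\<tau> I3")
      (simp_all add: relabel_shares_def swap_if_def)
qed

lemma is_3SS_permute:
  assumes "is_3SS (permute \<sigma> S) R P psi" and "bij \<sigma>"
  shows "is_3SS S R P (\<lambda>x r. relabel_shares (inv \<sigma>) (psi (x \<circ> \<sigma>) r))"
proof (rule is_3SS_reindex[OF assms(1), where k = "inv \<sigma>" and c = "\<lambda>_. False"])
  show "\<And>x. x \<in> S \<Longrightarrow> x \<circ> \<sigma> \<in> permute \<sigma> S" by (simp add: permute_def)
  show "\<And>j x. x j = ((x \<circ> \<sigma>) (inv \<sigma> j) \<noteq> False)"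
    using assms(2) by (simp add: bij_is_surj surj_f_inv_f)
  show "\<And>j w. view j (relabel_shares (inv \<sigma>) w) =
      swap_if (inv \<sigma> (succ_idx j) \<noteq> succ_idx (inv \<sigma> j)) (view (inv \<sigma> j) w)"
    using assms(2) by (intro view_relabel_shares) (simp add: bij_imp_bij_inv bij_is_inj)
qed simp

lemma randomness_ge_8_mono: "randomness_ge_8 S \<Longrightarrow> S \<subseteq> S' \<Longrightarrow> randomness_ge_8 S'"
  unfolding randomness_ge_8_def using is_3SS_subset by blast

lemma randomness_ge_8_negate: "randomness_ge_8 S \<Longrightarrow> randomness_ge_8 (negate i S)"
  unfolding randomness_ge_8_def using is_3SS_negate by blast

lemma randomness_ge_8_permute: "randomness_ge_8 S \<Longrightarrow> bij \<sigma> \<Longrightarrow> randomness_ge_8 (permute \<sigma> S)"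
  unfolding randomness_ge_8_def using is_3SS_permute by blast

lemma randomness_ge_8_equiv_sets:
  "S \<in> equiv_sets S0 \<Longrightarrow> randomness_ge_8 S0 \<Longrightarrow> randomness_ge_8 S"
  by (induction S rule: equiv_sets.induct)
    (auto intro: randomness_ge_8_negate randomness_ge_8_permute)

lemma xor_less_two_power:
  fixes a b :: nat
  assumes "a < 2 ^ n" and "b < 2 ^ n"
  shows "a XOR b < 2 ^ n"
proof -
  have "take_bit n a = a" "take_bit n b = b"
    using assms by (simp_all add: take_bit_nat_eq_self_iff)
  then have "take_bit n (a XOR b) = a XOR b" by (metis take_bit_xor)
  then show ?thesis using take_bit_nat_less_exp[of n "a XOR b"] by simp
qed

lemma bij_betw_xor:
  fixes m :: nat
  assumes "m < 2 ^ n"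
  shows "bij_betw (\<lambda>r. r XOR m) {..<2 ^ n} {..<2 ^ n}"
  by (rule bij_betw_byWitness[where f' = "\<lambda>r. r XOR m"])
    (auto simp: xor.assoc xor_less_two_power assms)

definition pack :: "bool \<Rightarrow> bool \<Rightarrow> nat" where
  "pack a b = 2 * of_bool a + of_bool b"

lemma pack_div_2 [simp]: "pack a b div 2 = of_bool a"
  by (cases a; cases b) (simp_all add: pack_def)

lemma odd_pack [simp]: "odd (pack a b) \<longleftrightarrow> b"
  by (cases a; cases b) (simp_all add: pack_def)

text \<open>The random bits \<open>r0, r1, r2\<close> are the binary digits of \<open>r \<in> {..<8}\<close>, addition over
  GF(2) is \<open>\<noteq>\<close>, and a pair of bits \<open>(a, b)\<close> is encoded as the share \<open>2a + b\<close>.\<close>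
definition pad_shares :: "secret \<Rightarrow> nat \<Rightarrow> shares" where
  "pad_shares x r =
     (pack (bit r 0) (bit r 1), pack (bit r 1 \<noteq> x I2) (bit r 2), pack (bit r 2 \<noteq> x I3) (bit r 0 \<noteq> x I1))"

definition of_bits :: "bool \<Rightarrow> bool \<Rightarrow> bool \<Rightarrow> nat" where
  "of_bits a b c = of_bool a + 2 * of_bool b + 4 * of_bool c"

lemma bit_of_bits [simp]:
  assumes "n < 3"
  shows "bit (of_bits a b c) n \<longleftrightarrow> n = 0 \<and> a \<or> n = 1 \<and> b \<or> n = 2 \<and> c"
proof -
  have "n = 0 \<or> n = 1 \<or> n = 2" using assms by arith
  then show ?thesis by (cases a; cases b; cases c) (auto simp: of_bits_def bit_nat_def)
qed

lemma of_bits_less: "of_bits a b c < 2 ^ 3"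
  by (simp add: of_bits_def)

text \<open>Flipping the random bits that mask the coordinates party \<open>i\<close> cannot see turns
  the shares of \<open>x\<close> into those of \<open>x'\<close> without changing the view of party \<open>i\<close>.\<close>
fun pad_mask :: "idx \<Rightarrow> secret \<Rightarrow> secret \<Rightarrow> nat" where
  "pad_mask I1 x x' = of_bits False False (x I3 \<noteq> x' I3)"
| "pad_mask I2 x x' = of_bits False False False"
| "pad_mask I3 x x' = of_bits (x I1 \<noteq> x' I1) (x I2 \<noteq> x' I2) False"

lemma pad_mask_less: "pad_mask i x x' < 2 ^ 3"
  by (cases i) (simp_all only: pad_mask.simps of_bits_less)

lemma view_pad_shares_xor_pad_mask:
  assumes "x i = x' i"
  shows "view i (pad_shares x' (r XOR pad_mask i x x')) = view i (pad_shares x r)"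
  using assms
  by (cases i; cases "x I1"; cases "x' I1"; cases "x I2"; cases "x' I2"; cases "x I3"; cases "x' I3")
    (simp_all add: pad_shares_def bit_xor_iff)

lemma is_3SS_pad_shares: "is_3SS UNIV {..<8} (\<lambda>_. 1 / 8) pad_shares"
proof (rule is_3SSI)
  fix i
  show "\<exists>phi. \<forall>x\<in>UNIV. \<forall>r\<in>{..<8}. 0 < (1 / 8 :: real) \<longrightarrow> phi (view i (pad_shares x r)) = x i"
    by (rule exI[of _ "\<lambda>(a, b). odd (a div 2) \<noteq> odd b"]) (cases i; simp add: pad_shares_def)
next
  fix i :: idx and x x' :: secret and v assume "x i = x' i"
  have "bij_betw (\<lambda>r. r XOR pad_mask i x x') {..<8} {..<8}"
    using bij_betw_xor[OF pad_mask_less] by simp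
  then have "bij_betw (\<lambda>r. r XOR pad_mask i x x')
      {r\<in>{..<8}. view i (pad_shares x r) = v} {r\<in>{..<8}. view i (pad_shares x' r) = v}"
    by (rule bij_betw_Collect) (simp add: view_pad_shares_xor_pad_mask[of x i x', OF \<open>x i = x' i\<close>])
  then show "sum (\<lambda>_. 1 / 8) {r\<in>{..<8}. view i (pad_shares x r) = v} =
      sum (\<lambda>_. 1 / 8 :: real) {r\<in>{..<8}. view i (pad_shares x' r) = v}"
    by (simp add: bij_betw_same_card)
qed simp_all

lemma rho_eq_3_if_randomness_ge_8:
  assumes "randomness_ge_8 S"
  shows "rho S = 3"
proof -
  have "is_3SS S {..<8} (\<lambda>_. 1 / 8) pad_shares"
    using is_3SS_pad_shares by (rule is_3SS_subset) simp
  then have "(LEAST n. \<exists>R P psi. is_3SS S R P psi \<and> card R = n) = 8"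
    using assms unfolding randomness_ge_8_def by (intro Least_equality) force+
  then show ?thesis
    unfolding rho_def using log2_of_power_eq[of 8 3] by simp
qed

lemma trip_comp_succ_idx: "trip a b c \<circ> succ_idx = trip b c a"
  by (rule ext, case_tac x) (simp_all add: trip_def)

fun swap13 :: "idx \<Rightarrow> idx" where
  "swap13 I1 = I3" | "swap13 I2 = I2" | "swap13 I3 = I1"

lemma trip_comp_swap13: "trip a b c \<circ> swap13 = trip c b a"
  by (rule ext, case_tac x) (simp_all add: trip_def)

lemma bij_succ_idx: "bij succ_idx"
  by (rule o_bij[of "succ_idx \<circ> succ_idx"]; rule ext; case_tac x) simp_all

lemma bij_swap13: "bij swap13"
  by (rule o_bij[of swap13]; rule ext; case_tac x) simp_all

lemma randomness_ge_8_if_contains_copy_of_core_set: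
  assumes "core_set \<subseteq> S \<or> {trip 0 0 0, trip 1 0 0, trip 0 0 1, trip 0 1 1} \<subseteq> S
    \<or> {trip 0 0 0, trip 0 1 0, trip 0 0 1, trip 1 0 1} \<subseteq> S"
  shows "randomness_ge_8 S"
proof -
  have "permute succ_idx core_set = {trip 0 0 0, trip 1 0 0, trip 0 0 1, trip 0 1 1}"
    "permute swap13 core_set = {trip 0 0 0, trip 0 1 0, trip 0 0 1, trip 1 0 1}"
    by (simp_all add: permute_def core_set_def trip_comp_succ_idx trip_comp_swap13)
  then show ?thesis
    using assms randomness_ge_8_core_set bij_succ_idx bij_swap13
    by (metis randomness_ge_8_mono randomness_ge_8_permute)
qed

lemma trip_eq_iff:
  "trip a b c = trip a' b' c' \<longleftrightarrow> (a = 1 \<longleftrightarrow> a' = 1) \<and> (b = 1 \<longleftrightarrow> b' = 1) \<and> (c = 1 \<longleftrightarrow> c' = 1)"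
proof
  assume "trip a b c = trip a' b' c'"
  then have "trip a b c i = trip a' b' c' i" for i by simp
  from this[of I1] this[of I2] this[of I3] show "(a = 1 \<longleftrightarrow> a' = 1) \<and> (b = 1 \<longleftrightarrow> b' = 1) \<and> (c = 1 \<longleftrightarrow> c' = 1)"
    by (simp add: trip_def)
qed (simp add: trip_def fun_eq_iff split: idx.split)

theorem mainTheorem10:
  shows "\<forall>S0 \<in> {
      {trip 0 0 0, trip 0 1 0, trip 1 0 0, trip 1 0 1},
      {trip 0 0 0, trip 0 0 1, trip 0 1 0, trip 0 1 1, trip 1 0 0},
      {trip 0 0 0, trip 0 0 1, trip 0 1 0, trip 0 1 1, trip 1 0 0, trip 1 0 1},
      {trip 0 0 0, trip 0 0 1, trip 0 1 0, trip 1 0 1, trip 1 1 0},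
      {trip 0 0 0, trip 0 0 1, trip 0 1 0, trip 0 1 1, trip 1 0 0, trip 1 1 1},
      {trip 0 0 0, trip 0 0 1, trip 0 1 0, trip 1 0 1, trip 1 1 0, trip 1 1 1},
      UNIV - {trip 1 1 1},
      UNIV}.
    \<forall>S \<in> equiv_sets S0. rho S = 3"
  by (intro ballI rho_eq_3_if_randomness_ge_8, erule randomness_ge_8_equiv_sets,
      elim insertE emptyE; hypsubst; rule randomness_ge_8_if_contains_copy_of_core_set)
    (auto simp: core_set_def trip_eq_iff)

end
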